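(* Let $\sigma\in\mathcal T$ be an admissible type. For any $0\le r_1<r_2$ there is $\alpha\in\mathbb Q_+$ such that $\rho_{\mathrm{Id}}(r_1)\le(\alpha\cdot\sigma)(1,0)\le\omega_{\mathrm{Id}}(r_2)$.
   Context: Standing setting: $(X,\|\cdot\|)$ is a separable infinite-dimensional Banach space and $d$ is a translation-invariant stable pseudometric on $X$ such that $\mathrm{Id}\colon(X,\|\cdot\|)\to(X,d)$ is a coarse equivalence, with $\omega_{\mathrm{Id}}(t)=\sup\{d(x,y):\|x-y\|\le t\}$, $\rho_{\mathrm{Id}}(t)=\inf\{d(x,y):\|x-y\|\ge t\}$. $\Delta$ is a countable $\|\cdot\|$-dense $\mathbb Q$-linear subspace; $\bar x(\lambda,y)=d(\lambda x,y)$; $\mathcal T$ is the pointwise closure of $\{\bar x:x\in\Delta\}$ in $\mathbb R^{\mathbb Q\times\Delta}$; a defining sequence for $\sigma$ is $(x_n)\subseteq\Delta$ with $\bar x_n\to\sigma$. Dilation: for $\alpha\in\mathbb Q$, $\alpha\cdot\sigma=\lim_n\overline{\alpha x_n}$ for any defining sequence $(x_n)$ of $\sigma$; equivalently $(\alpha\cdot\sigma)(\lambda,x)=\sigma(\lambda\alpha,x)$. With $\gamma=\inf_{t>0}\omega_{\mathrm{Id}}(t)$, a type $\sigma$ is admissible if $\sigma(1,0)>\gamma$. *)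

theory Defs
  imports "HOL-Analysis.Analysis"
begin

definition pseudometric :: "('a \<Rightarrow> 'a \<Rightarrow> real) \<Rightarrow> bool" where
  "pseudometric d \<longleftrightarrow> (\<forall>x. d x x = 0) \<and> (\<forall>x y. 0 \<le> d x y) \<and> (\<forall>x y. d x y = d y x)
     \<and> (\<forall>x y z. d x z \<le> d x y + d y z)"

definition translation_invariant :: "('a::ab_group_add \<Rightarrow> 'a \<Rightarrow> real) \<Rightarrow> bool" where
  "translation_invariant d \<longleftrightarrow> (\<forall>x y z. d (x + z) (y + z) = d x y)"

definition stable_pm :: "('a \<Rightarrow> 'a \<Rightarrow> real) \<Rightarrow> bool" where
  "stable_pm d \<longleftrightarrow> (\<forall>(u::nat \<Rightarrow> 'a) (v::nat \<Rightarrow> 'a) a b.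
      (\<exists>z R. \<forall>n. d (u n) z \<le> R \<and> d (v n) z \<le> R) \<longrightarrow>
      (\<lambda>n. lim (\<lambda>m. d (u n) (v m))) \<longlonglongrightarrow> a \<longrightarrow>
      (\<forall>n. convergent (\<lambda>m. d (u n) (v m))) \<longrightarrow>
      (\<lambda>m. lim (\<lambda>n. d (u n) (v m))) \<longlonglongrightarrow> b \<longrightarrow>
      (\<forall>m. convergent (\<lambda>n. d (u n) (v m))) \<longrightarrow> a = b)"

definition id_coarse_equivalence :: "('a::real_normed_vector \<Rightarrow> 'a \<Rightarrow> real) \<Rightarrow> bool" where
  "id_coarse_equivalence d \<longleftrightarrow>
     (\<forall>t. \<exists>C. \<forall>x y. norm (x - y) \<le> t \<longrightarrow> d x y \<le> C) \<and>
     (\<forall>s. \<exists>C. \<forall>x y. d x y \<le> s \<longrightarrow> norm (x - y) \<le> C)"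

definition omega_Id :: "('a::real_normed_vector \<Rightarrow> 'a \<Rightarrow> real) \<Rightarrow> real \<Rightarrow> real" where
  "omega_Id d t = Sup {d x y | x y. norm (x - y) \<le> t}"

definition rho_Id :: "('a::real_normed_vector \<Rightarrow> 'a \<Rightarrow> real) \<Rightarrow> real \<Rightarrow> real" where
  "rho_Id d t = Inf {d x y | x y. norm (x - y) \<ge> t}"

definition gamma_Id :: "('a::real_normed_vector \<Rightarrow> 'a \<Rightarrow> real) \<Rightarrow> real" where
  "gamma_Id d = Inf (omega_Id d ` {0<..})"

definition Q_dense_subspace :: "'a::real_normed_vector set \<Rightarrow> bool" where
  "Q_dense_subspace D \<longleftrightarrow> countable D \<and> closure D = UNIV \<and> 0 \<in> D \<and>
     (\<forall>x\<in>D. \<forall>y\<in>D. x + y \<in> D) \<and> (\<forall>q::rat. \<forall>x\<in>D. of_rat q *\<^sub>R x \<in> D)"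

text \<open>bar x (lambda, y) = d (lambda x) y, as a function on Q x X (only its values
  on Q x Delta are relevant).\<close>
definition bar :: "('a::real_normed_vector \<Rightarrow> 'a \<Rightarrow> real) \<Rightarrow> 'a \<Rightarrow> rat \<Rightarrow> 'a \<Rightarrow> real" where
  "bar d x = (\<lambda>l y. d (of_rat l *\<^sub>R x) y)"

definition defining_seq ::
  "('a::real_normed_vector \<Rightarrow> 'a \<Rightarrow> real) \<Rightarrow> 'a set \<Rightarrow> (nat \<Rightarrow> 'a) \<Rightarrow> (rat \<Rightarrow> 'a \<Rightarrow> real) \<Rightarrow> bool" where
  "defining_seq d D x \<sigma> \<longleftrightarrow> range x \<subseteq> D \<and>
     (\<forall>l. \<forall>y\<in>D. (\<lambda>n. bar d (x n) l y) \<longlonglongrightarrow> \<sigma> l y)"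

text \<open>Membership in the pointwise closure T of {bar x : x in Delta} in R^(Q x Delta);
  since Q x Delta is countable this product is metrizable, so closure = sequential closure.\<close>
definition is_type ::
  "('a::real_normed_vector \<Rightarrow> 'a \<Rightarrow> real) \<Rightarrow> 'a set \<Rightarrow> (rat \<Rightarrow> 'a \<Rightarrow> real) \<Rightarrow> bool" where
  "is_type d D \<sigma> \<longleftrightarrow> (\<exists>x. defining_seq d D x \<sigma>)"

definition dilation :: "rat \<Rightarrow> (rat \<Rightarrow> 'a \<Rightarrow> real) \<Rightarrow> rat \<Rightarrow> 'a \<Rightarrow> real" where
  "dilation \<alpha> \<sigma> = (\<lambda>l y. \<sigma> (l * \<alpha>) y)"

definition admissible :: "('a::real_normed_vector \<Rightarrow> 'a \<Rightarrow> real) \<Rightarrow> (rat \<Rightarrow> 'a \<Rightarrow> real) \<Rightarrow> bool" where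
  "admissible d \<sigma> \<longleftrightarrow> \<sigma> 1 0 > gamma_Id d"

end

theory Submission
  imports Defs
begin

text \<open>Along a defining sequence \<open>(x\<^sub>n)\<close> of \<open>\<sigma>\<close> the values \<open>d(x\<^sub>n,0)\<close> converge, so by
  coarseness of \<open>Id\<^sup>-\<^sup>1\<close> the norms \<open>\<parallel>x\<^sub>n\<parallel>\<close> are bounded and a subsequence has
  \<open>\<parallel>x\<^sub>n\<parallel> \<rightarrow> L\<close>. Admissibility forces \<open>L > 0\<close>: if \<open>L = 0\<close> then \<open>\<sigma>(1,0) \<le> \<omega>\<^sub>I\<^sub>d(t)\<close> for
  every \<open>t > 0\<close>. Choosing a rational \<open>\<alpha>\<close> with \<open>r\<^sub>1 < \<alpha>L < r\<^sub>2\<close>, eventually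
  \<open>r\<^sub>1 < \<parallel>\<alpha>x\<^sub>n\<parallel> < r\<^sub>2\<close>, so \<open>d(\<alpha>x\<^sub>n,0)\<close>, which tends to \<open>(\<alpha>\<cdot>\<sigma>)(1,0)\<close>, is trapped between
  \<open>\<rho>\<^sub>I\<^sub>d(r\<^sub>1)\<close> and \<open>\<omega>\<^sub>I\<^sub>d(r\<^sub>2)\<close>.\<close>

lemma le_omega_Id:
  fixes d :: "'a::real_normed_vector \<Rightarrow> 'a \<Rightarrow> real"
  assumes ce: "id_coarse_equivalence d" and "norm (x - y) \<le> t"
  shows "d x y \<le> omega_Id d t"
proof -
  obtain C where "\<forall>x y. norm (x - y) \<le> t \<longrightarrow> d x y \<le> C"
    using ce unfolding id_coarse_equivalence_def by blast
  then have "bdd_above {d x y | x y. norm (x - y) \<le> t}"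
    by (auto intro!: bdd_aboveI)
  moreover have "d x y \<in> {d x y | x y. norm (x - y) \<le> t}"
    using assms(2) by blast
  ultimately show ?thesis
    unfolding omega_Id_def by (rule cSup_upper[rotated])
qed

lemma rho_Id_le:
  fixes d :: "'a::real_normed_vector \<Rightarrow> 'a \<Rightarrow> real"
  assumes pm: "pseudometric d" and "t \<le> norm (x - y)"
  shows "rho_Id d t \<le> d x y"
proof -
  have "bdd_below {d x y | x y. t \<le> norm (x - y)}"
    using pm unfolding pseudometric_def by (auto intro!: bdd_belowI[where m = 0])
  moreover have "d x y \<in> {d x y | x y. t \<le> norm (x - y)}"
    using assms(2) by blast
  ultimately show ?thesis
    unfolding rho_Id_def by (rule cInf_lower[rotated])
qed

lemma norm_bounded_if_convergent_dist_zero: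
  fixes d :: "'a::real_normed_vector \<Rightarrow> 'a \<Rightarrow> real"
  assumes ce: "id_coarse_equivalence d" and "convergent (\<lambda>n. d (x n) 0)"
  obtains C where "\<And>n. norm (x n) \<le> C"
proof -
  obtain K where K: "\<And>n. \<bar>d (x n) 0\<bar> \<le> K"
    using convergent_imp_Bseq[OF assms(2)] unfolding Bseq_def
    by (auto intro: less_imp_le)
  obtain C where "\<forall>u v. d u v \<le> K \<longrightarrow> norm (u - v) \<le> C"
    using ce unfolding id_coarse_equivalence_def by blast
  with K have "norm (x n) \<le> C" for n
    by (metis abs_le_iff diff_zero)
  then show thesis by (rule that)
qed

lemma bounded_norm_convergent_subseq:
  fixes x :: "nat \<Rightarrow> 'a::real_normed_vector"
  assumes "\<And>n. norm (x n) \<le> C"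
  obtains r L where "strict_mono r" "0 \<le> L" "(\<lambda>n. norm (x (r n))) \<longlonglongrightarrow> L"
proof -
  have "seq_compact {0..C}"
    by (simp add: compact_imp_seq_compact)
  moreover have "\<forall>n. norm (x n) \<in> {0..C}"
    using assms by simp
  ultimately obtain L r where "L \<in> {0..C}" "strict_mono r"
      "((\<lambda>n. norm (x n)) \<circ> r) \<longlonglongrightarrow> L"
    unfolding seq_compact_def by meson
  then show thesis
    using that by (auto simp: o_def)
qed

lemma limit_le_gamma_Id:
  fixes d :: "'a::real_normed_vector \<Rightarrow> 'a \<Rightarrow> real"
  assumes ce: "id_coarse_equivalence d"
    and norm_lim: "(\<lambda>n. norm (x n)) \<longlonglongrightarrow> 0"
    and d_lim: "(\<lambda>n. d (x n) 0) \<longlonglongrightarrow> s"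
  shows "s \<le> gamma_Id d"
  unfolding gamma_Id_def
proof (rule cInf_greatest)
  show "omega_Id d ` {0<..} \<noteq> {}"
    by auto
next
  fix w
  assume "w \<in> omega_Id d ` {0<..}"
  then obtain t where "0 < t" and w: "w = omega_Id d t"
    by auto
  have "eventually (\<lambda>n. d (x n) 0 \<le> w) sequentially"
    using order_tendstoD(2)[OF norm_lim \<open>0 < t\<close>]
    by eventually_elim (simp add: w le_omega_Id[OF ce])
  then show "s \<le> w"
    using tendsto_upperbound[OF d_lim] by simp
qed

lemma limit_between_rho_omega_Id:
  fixes d :: "'a::real_normed_vector \<Rightarrow> 'a \<Rightarrow> real"
  assumes pm: "pseudometric d" and ce: "id_coarse_equivalence d"
    and norm_lim: "(\<lambda>n. norm (x n)) \<longlonglongrightarrow> L"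
    and d_lim: "(\<lambda>n. d (x n) 0) \<longlonglongrightarrow> s"
    and "r1 < L" "L < r2"
  shows "rho_Id d r1 \<le> s" "s \<le> omega_Id d r2"
proof -
  have "eventually (\<lambda>n. rho_Id d r1 \<le> d (x n) 0) sequentially"
    using order_tendstoD(1)[OF norm_lim \<open>r1 < L\<close>]
    by eventually_elim (simp add: rho_Id_le[OF pm])
  then show "rho_Id d r1 \<le> s"
    using tendsto_lowerbound[OF d_lim] by simp
  have "eventually (\<lambda>n. d (x n) 0 \<le> omega_Id d r2) sequentially"
    using order_tendstoD(2)[OF norm_lim \<open>L < r2\<close>]
    by eventually_elim (simp add: le_omega_Id[OF ce])
  then show "s \<le> omega_Id d r2"
    using tendsto_upperbound[OF d_lim] by simp
qed

lemma rat_multiple_between: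
  fixes L r1 r2 :: real
  assumes "0 < L" "0 \<le> r1" "r1 < r2"
  obtains q :: rat where "0 < q" "r1 < of_rat q * L" "of_rat q * L < r2"
proof -
  obtain q where q: "r1 / L < of_rat q" "of_rat q < r2 / L"
    using of_rat_dense assms by (meson divide_strict_right_mono)
  moreover have "0 \<le> r1 / L"
    using assms by simp
  ultimately have "0 < q"
    by (metis le_less_trans zero_less_of_rat_iff)
  with q show thesis
    using that assms(1)
    by (simp add: pos_divide_less_eq pos_less_divide_eq mult.commute)
qed

theorem lemma5p2:
  fixes d :: "'a::banach \<Rightarrow> 'a \<Rightarrow> real"
    and D :: "'a set"
    and \<sigma> :: "rat \<Rightarrow> 'a \<Rightarrow> real"
    and r1 r2 :: real
  assumes separable: "\<exists>C::'a set. countable C \<and> closure C = UNIV"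
    and inf_dim: "\<forall>B::'a set. finite B \<longrightarrow> span B \<noteq> UNIV"
    and pm: "pseudometric d"
    and ti: "translation_invariant d"
    and st: "stable_pm d"
    and ce: "id_coarse_equivalence d"
    and DD: "Q_dense_subspace D"
    and ty: "is_type d D \<sigma>"
    and adm: "admissible d \<sigma>"
    and r: "0 \<le> r1" "r1 < r2"
  shows "\<exists>\<alpha>::rat. \<alpha> > 0 \<and> rho_Id d r1 \<le> dilation \<alpha> \<sigma> 1 0
           \<and> dilation \<alpha> \<sigma> 1 0 \<le> omega_Id d r2"
proof -
  obtain x where "defining_seq d D x \<sigma>"
    using ty unfolding is_type_def by blast
  moreover have "0 \<in> D"
    using DD unfolding Q_dense_subspace_def by blast
  ultimately have conv: "(\<lambda>n. d (of_rat q *\<^sub>R x n) 0) \<longlonglongrightarrow> \<sigma> q 0" for q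
    unfolding defining_seq_def bar_def by blast
  obtain C where "\<And>n. norm (x n) \<le> C"
    using norm_bounded_if_convergent_dist_zero[OF ce] conv[of 1] by (auto intro: convergentI)
  then obtain r L where r_mono: "strict_mono r" and "0 \<le> L"
    and norm_lim: "(\<lambda>n. norm (x (r n))) \<longlonglongrightarrow> L"
    by (rule bounded_norm_convergent_subseq)
  have conv_r: "(\<lambda>n. d (of_rat q *\<^sub>R x (r n)) 0) \<longlonglongrightarrow> \<sigma> q 0" for q
    using LIMSEQ_subseq_LIMSEQ[OF conv r_mono] by (simp add: o_def)
  have "L \<noteq> 0"
    using limit_le_gamma_Id[OF ce _ conv_r[of 1]] norm_lim adm
    unfolding admissible_def by force
  then obtain q where "0 < q" and qL: "r1 < of_rat q * L" "of_rat q * L < r2"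
    using rat_multiple_between \<open>0 \<le> L\<close> r by (metis order_le_less)
  have "(\<lambda>n. norm (of_rat q *\<^sub>R x (r n))) \<longlonglongrightarrow> of_rat q * L"
    using tendsto_mult_left[OF norm_lim, of "of_rat q"] \<open>0 < q\<close> by simp
  note bounds = limit_between_rho_omega_Id[OF pm ce this conv_r qL]
  show ?thesis
    using \<open>0 < q\<close> bounds unfolding dilation_def by auto
qed

end
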